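(* Let $\mathcal G=\langle V=V_{\mathrm{Min}}\uplus V_{\mathrm{Max}}, V_T, A, E, \omega\rangle$ be a finite weighted game and $c\colon V_T\to\mathbb Z$. Assume that the subgraph induced by $V\setminus V_T$ is strongly connected, that every cycle all of whose vertices lie in $V\setminus V_T$ has positive weight, and that no vertex has value $+\infty$ (with respect to $c$). Let $n=|V\setminus V_T|$. Define $\vec x^0$ by $\vec x^0_v=c(v)$ for $v\in V_T$ and $\vec x^0_v=+\infty$ for $v\in V\setminus V_T$, and $\vec x^i=F(\vec x^{i-1})$ for $i>0$. Then $\vec x^{n+k}=\vec x^n$ for all $k\ge 0$.
   Context: A weighted game has vertices $V$ partitioned into vertices of Min and of Max, targets $V_T\subseteq V_{\mathrm{Min}}$, alphabet $A$, edges $E\subseteq V\times A\times V$, weights $\omega\colon E\to\mathbb Z$, and is deadlock-free (every vertex has an outgoing edge) and deterministic (for each $(v,a)$ at most one $v'$ with $(v,a,v')\in E$). A cycle is a finite sequence of consecutive edges starting and ending at the same vertex (length $\ge1$); its weight is the sum of its edge weights. Strategies, outcomes and values: a strategy of a player chooses, after each finite play ending in one of its vertices, a letter of an outgoing edge; with target values $c\colon V_T\to\mathbb Z$, the weight of a play is $+\infty$ if it never visits $V_T$, and otherwise the sum of the weights of its edges up to the first visit of some $t\in V_T$ plus $c(t)$; the value of $v$ is $\inf_{\sigma_{\mathrm{Min}}}\sup_{\sigma_{\mathrm{Max}}}$ (equal to $\sup_{\sigma_{\mathrm{Max}}}\inf_{\sigma_{\mathrm{Min}}}$) of the weight of the outcome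 from $v$. The operator $F\colon(\mathbb Z\cup\{-\infty,+\infty\})^V\to(\mathbb Z\cup\{-\infty,+\infty\})^V$ is defined by $F(\vec x)_v=c(v)$ if $v\in V_T$, $F(\vec x)_v=\min_{e=(v,a,v')\in E}\omega(e)+\vec x_{v'}$ if $v\in V_{\mathrm{Min}}\setminus V_T$, and $F(\vec x)_v=\max_{e=(v,a,v')\in E}\omega(e)+\vec x_{v'}$ if $v\in V_{\mathrm{Max}}$. *)

theory Defs
  imports "HOL-Library.Extended_Real"
begin

text \<open>Vertices form a finite type 'v (so V = UNIV); Min owns VMin,
  Max owns the complement -VMin; targets VT are a subset of VMin; edges are
  triples (v, a, v') with letters of type 'a; weights w and target values c.\<close>

type_synonym ('v, 'a) edge = "'v \<times> 'a \<times> 'v"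

definition src :: "('v, 'a) edge \<Rightarrow> 'v" where "src e = fst e"
definition lbl :: "('v, 'a) edge \<Rightarrow> 'a" where "lbl e = fst (snd e)"
definition tgt :: "('v, 'a) edge \<Rightarrow> 'v" where "tgt e = snd (snd e)"

definition deadlock_free :: "('v, 'a) edge set \<Rightarrow> bool" where
  "deadlock_free E \<longleftrightarrow> (\<forall>v. \<exists>a v'. (v, a, v') \<in> E)"

definition deterministic :: "('v, 'a) edge set \<Rightarrow> bool" where
  "deterministic E \<longleftrightarrow> (\<forall>v a v1 v2. (v, a, v1) \<in> E \<longrightarrow> (v, a, v2) \<in> E \<longrightarrow> v1 = v2)"

definition weighted_game :: "'v set \<Rightarrow> 'v set \<Rightarrow> ('v, 'a) edge set \<Rightarrow> bool" where
  "weighted_game VMin VT E \<longleftrightarrow> VT \<subseteq> VMin \<and> finite E \<and> deadlock_free E \<and> deterministic E"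

definition F_op :: "'v set \<Rightarrow> 'v set \<Rightarrow> ('v, 'a) edge set \<Rightarrow> (('v, 'a) edge \<Rightarrow> int)
    \<Rightarrow> ('v \<Rightarrow> int) \<Rightarrow> ('v \<Rightarrow> ereal) \<Rightarrow> ('v \<Rightarrow> ereal)" where
  "F_op VMin VT E w c x = (\<lambda>v.
     if v \<in> VT then ereal (of_int (c v))
     else if v \<in> VMin then Min ((\<lambda>e. ereal (of_int (w e)) + x (tgt e)) ` {e \<in> E. src e = v})
     else Max ((\<lambda>e. ereal (of_int (w e)) + x (tgt e)) ` {e \<in> E. src e = v}))"

definition is_cycle :: "('v, 'a) edge set \<Rightarrow> ('v, 'a) edge list \<Rightarrow> bool" where
  "is_cycle E es \<longleftrightarrow> es \<noteq> [] \<and> set es \<subseteq> E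
     \<and> (\<forall>i. Suc i < length es \<longrightarrow> tgt (es ! i) = src (es ! Suc i))
     \<and> tgt (last es) = src (hd es)"

definition cycle_weight :: "(('v, 'a) edge \<Rightarrow> int) \<Rightarrow> ('v, 'a) edge list \<Rightarrow> int" where
  "cycle_weight w es = sum_list (map w es)"

definition cycle_vertices :: "('v, 'a) edge list \<Rightarrow> 'v set" where
  "cycle_vertices es = src ` set es \<union> tgt ` set es"

definition induced_rel :: "('v, 'a) edge set \<Rightarrow> 'v set \<Rightarrow> ('v \<times> 'v) set" where
  "induced_rel E U = {(u, v). u \<in> U \<and> v \<in> U \<and> (\<exists>a. (u, a, v) \<in> E)}"

definition strongly_connected_on :: "('v, 'a) edge set \<Rightarrow> 'v set \<Rightarrow> bool" where
  "strongly_connected_on E U \<longleftrightarrow> (\<forall>u\<in>U. \<forall>v\<in>U. (u, v) \<in> (induced_rel E U)\<^sup>*)"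

text \<open>Plays, strategies, outcomes. A finite play (history) is a start vertex together with
  the list of edges taken so far. A strategy maps histories to letters.\<close>
type_synonym ('v, 'a) strategy = "'v \<times> ('v, 'a) edge list \<Rightarrow> 'a"

definition last_vertex :: "'v \<Rightarrow> ('v, 'a) edge list \<Rightarrow> 'v" where
  "last_vertex v0 es = (if es = [] then v0 else tgt (last es))"

definition strategy_ok :: "('v, 'a) edge set \<Rightarrow> 'v set \<Rightarrow> ('v, 'a) strategy \<Rightarrow> bool" where
  "strategy_ok E P \<sigma> \<longleftrightarrow>
     (\<forall>v0 es. last_vertex v0 es \<in> P \<longrightarrow> (\<exists>v'. (last_vertex v0 es, \<sigma> (v0, es), v') \<in> E))"

definition next_edge :: "('v, 'a) edge set \<Rightarrow> 'v set \<Rightarrow> ('v, 'a) strategy \<Rightarrow> ('v, 'a) strategy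
    \<Rightarrow> 'v \<Rightarrow> ('v, 'a) edge list \<Rightarrow> ('v, 'a) edge" where
  "next_edge E VMin sMin sMax v0 es =
     (let u = last_vertex v0 es;
          a = (if u \<in> VMin then sMin (v0, es) else sMax (v0, es))
      in THE e. e \<in> E \<and> src e = u \<and> lbl e = a)"

primrec outcome_prefix :: "('v, 'a) edge set \<Rightarrow> 'v set \<Rightarrow> ('v, 'a) strategy \<Rightarrow> ('v, 'a) strategy
    \<Rightarrow> 'v \<Rightarrow> nat \<Rightarrow> ('v, 'a) edge list" where
  "outcome_prefix E VMin sMin sMax v0 0 = []"
| "outcome_prefix E VMin sMin sMax v0 (Suc n) =
     (let es = outcome_prefix E VMin sMin sMax v0 n in es @ [next_edge E VMin sMin sMax v0 es])"

definition play_vertex :: "('v, 'a) edge set \<Rightarrow> 'v set \<Rightarrow> ('v, 'a) strategy \<Rightarrow> ('v, 'a) strategy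
    \<Rightarrow> 'v \<Rightarrow> nat \<Rightarrow> 'v" where
  "play_vertex E VMin sMin sMax v0 i = last_vertex v0 (outcome_prefix E VMin sMin sMax v0 i)"

definition outcome_weight :: "'v set \<Rightarrow> 'v set \<Rightarrow> ('v, 'a) edge set \<Rightarrow> (('v, 'a) edge \<Rightarrow> int)
    \<Rightarrow> ('v \<Rightarrow> int) \<Rightarrow> ('v, 'a) strategy \<Rightarrow> ('v, 'a) strategy \<Rightarrow> 'v \<Rightarrow> ereal" where
  "outcome_weight VMin VT E w c sMin sMax v0 =
     (if \<exists>i. play_vertex E VMin sMin sMax v0 i \<in> VT
      then (let k = (LEAST i. play_vertex E VMin sMin sMax v0 i \<in> VT)
            in ereal (of_int (sum_list (map w (outcome_prefix E VMin sMin sMax v0 k))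
                              + c (play_vertex E VMin sMin sMax v0 k))))
      else \<infinity>)"

definition game_value :: "'v set \<Rightarrow> 'v set \<Rightarrow> ('v, 'a) edge set \<Rightarrow> (('v, 'a) edge \<Rightarrow> int)
    \<Rightarrow> ('v \<Rightarrow> int) \<Rightarrow> 'v \<Rightarrow> ereal" where
  "game_value VMin VT E w c v =
     (INF sMin\<in>{\<sigma>. strategy_ok E VMin \<sigma>}. SUP sMax\<in>{\<sigma>. strategy_ok E (- VMin) \<sigma>}.
        outcome_weight VMin VT E w c sMin sMax v)"

definition x0_vec :: "'v set \<Rightarrow> ('v \<Rightarrow> int) \<Rightarrow> 'v \<Rightarrow> ereal" where
  "x0_vec VT c = (\<lambda>v. if v \<in> VT then ereal (of_int (c v)) else \<infinity>)"

end

theory Submission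
  imports Defs
begin

text \<open>The iterates \<open>x\<^sup>k\<close> decrease pointwise and never reach \<open>-\<infinity>\<close>. Suppose
  \<open>x\<^sup>k\<^sup>+\<^sup>1(u) < x\<^sup>k(u)\<close>, and let \<open>e = (u, u')\<close> be the edge optimal for the owner of \<open>u\<close>
  (for \<open>x\<^sup>k\<close> if Min owns \<open>u\<close>, for \<open>x\<^sup>k\<^sup>-\<^sup>1\<close> if Max does). Then
  \<open>\<omega>(e) + x\<^sup>k(u') \<le> x\<^sup>k\<^sup>+\<^sup>1(u) < x\<^sup>k(u) \<le> \<omega>(e) + x\<^sup>k\<^sup>-\<^sup>1(u')\<close>, so the strict decrease
  moves to \<open>u'\<close> one level down. A strict decrease at a level \<open>k \<ge> |V - V\<^sub>T|\<close> thus yields a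
  walk through \<open>k + 1\<close> non-target vertices, which closes a cycle. Telescoping the left inequality
  around the cycle bounds its weight by \<open>x\<^sup>l(u) - x\<^sup>l\<^sup>'(u) \<le> 0\<close> for some levels \<open>l > l'\<close>,
  contradicting positivity.\<close>

lemma is_cycle_of_walk:
  assumes "\<And>l. i \<le> l \<Longrightarrow> l < j \<Longrightarrow> es l \<in> E \<and> src (es l) = y l \<and> tgt (es l) = y (Suc l)"
    and "i < j" and "y j = y i"
  shows "is_cycle E (map es [i..<j])" and "cycle_vertices (map es [i..<j]) \<subseteq> y ` {i..j}"
proof -
  have "tgt (map es [i..<j] ! l) = src (map es [i..<j] ! Suc l)"
    if "Suc l < length (map es [i..<j])" for l
    using that assms(1)[of "i + l"] assms(1)[of "i + Suc l"] by simp
  moreover have "tgt (last (map es [i..<j])) = src (hd (map es [i..<j]))"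
    using assms by (simp add: last_map hd_map)
  ultimately show "is_cycle E (map es [i..<j])"
    using assms by (auto simp: is_cycle_def)
  show "cycle_vertices (map es [i..<j]) \<subseteq> y ` {i..j}"
    using assms(1) by (force simp: cycle_vertices_def)
qed

lemma ereal_telescope_le:
  fixes g :: "nat \<Rightarrow> ereal" and a :: "nat \<Rightarrow> int"
  assumes "\<And>l. i \<le> l \<Longrightarrow> l < j \<Longrightarrow> ereal (a l) + g (Suc l) \<le> g l" and "i \<le> j"
  shows "ereal (\<Sum>l\<in>{i..<j}. a l) + g j \<le> g i"
  using assms(2,1)
proof (induction j rule: dec_induct)
  case base
  then show ?case by simp
next
  case (step n)
  have "ereal (\<Sum>l\<in>{i..<Suc n}. a l) + g (Suc n) = ereal (\<Sum>l\<in>{i..<n}. a l) + (ereal (a n) + g (Suc n))"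
    using step.hyps by (simp add: add.assoc flip: plus_ereal.simps(1))
  also have "\<dots> \<le> ereal (\<Sum>l\<in>{i..<n}. a l) + g n"
    using step.hyps step.prems by (intro add_left_mono) simp
  also have "\<dots> \<le> g i"
    using step.IH step.prems by simp
  finally show ?case .
qed

locale iterated_game =
  fixes VMin VT :: "'v set" and E :: "('v, 'a) edge set"
    and w :: "('v, 'a) edge \<Rightarrow> int" and c :: "'v \<Rightarrow> int"
  assumes finite_edges: "finite E" and deadlock_free: "deadlock_free E"
begin

abbreviation F :: "('v \<Rightarrow> ereal) \<Rightarrow> 'v \<Rightarrow> ereal" where
  "F \<equiv> F_op VMin VT E w c"

definition F_iter :: "nat \<Rightarrow> 'v \<Rightarrow> ereal" where
  "F_iter k = (F ^^ k) (x0_vec VT c)"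

lemma F_iter_Suc: "F_iter (Suc k) = F (F_iter k)"
  by (simp add: F_iter_def)

lemma F_iter_target: "u \<in> VT \<Longrightarrow> F_iter k u = ereal (c u)"
  by (cases k) (simp_all add: F_iter_def x0_vec_def F_op_def)

lemma finite_out_edges: "finite {e \<in> E. src e = u}"
  using finite_edges by simp

lemma out_edges_nonempty: "{e \<in> E. src e = u} \<noteq> {}"
  using deadlock_free unfolding deadlock_free_def src_def by fastforce

lemma mono_F: "mono F"
proof (rule monoI, rule le_funI)
  fix x y :: "'v \<Rightarrow> ereal" and u
  assume "x \<le> y"
  define S where "S = {e \<in> E. src e = u}"
  define f where "f z e = ereal (w e) + z (tgt e)" for z e
  have S: "finite S" "S \<noteq> {}" using finite_out_edges out_edges_nonempty by (auto simp: S_def)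
  have le: "f x e \<le> f y e" for e
    using \<open>x \<le> y\<close> by (simp add: f_def le_fun_def add_left_mono)
  have "Min (f x ` S) \<le> Min (f y ` S)"
  proof -
    obtain e where "e \<in> S" "Min (f y ` S) = f y e" using obtains_MIN[OF S] .
    then show ?thesis using S le[of e] by (metis Min_le finite_imageI image_eqI order_trans)
  qed
  moreover have "Max (f x ` S) \<le> Max (f y ` S)"
  proof -
    obtain e where "e \<in> S" "Max (f x ` S) = f x e" using obtains_MAX[OF S] .
    then show ?thesis using S le[of e] by (metis Max_ge finite_imageI image_eqI order_trans)
  qed
  ultimately show "F x u \<le> F y u"
    unfolding F_op_def S_def f_def by simp
qed

lemma decseq_F_iter: "decseq F_iter"
proof (rule decseq_SucI)
  fix k show "F_iter (Suc k) \<le> F_iter k"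
  proof (induction k)
    case 0
    show ?case by (auto simp: le_fun_def F_iter_def x0_vec_def F_op_def)
  next
    case (Suc k)
    then show ?case using mono_F by (simp add: F_iter_Suc monoD)
  qed
qed

lemma F_iter_not_MInfty: "F_iter k u \<noteq> -\<infinity>"
proof (induction k arbitrary: u)
  case 0
  show ?case by (simp add: F_iter_def x0_vec_def)
next
  case (Suc k)
  define S where "S = (\<lambda>e. ereal (w e) + F_iter k (tgt e)) ` {e \<in> E. src e = u}"
  have "finite S" "S \<noteq> {}" using finite_out_edges out_edges_nonempty by (auto simp: S_def)
  moreover have "-\<infinity> \<notin> S" using Suc.IH by (auto simp: S_def)
  ultimately have "Min S \<noteq> -\<infinity>" "Max S \<noteq> -\<infinity>" by (metis Min_in, metis Max_in)
  then show ?case by (simp add: F_iter_Suc F_op_def S_def)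
qed

text \<open>Take the optimal edge for \<open>x\<close> if Min owns \<open>u\<close>, and the optimal edge for \<open>y\<close> if Max does.\<close>

lemma F_bracketing_edge:
  assumes "u \<notin> VT"
  obtains e where "e \<in> E" "src e = u" "ereal (w e) + x (tgt e) \<le> F x u"
    "F y u \<le> ereal (w e) + y (tgt e)"
proof -
  define S where "S = {e \<in> E. src e = u}"
  define f where "f z e = ereal (w e) + z (tgt e)" for z e
  have S: "finite S" "S \<noteq> {}" using finite_out_edges out_edges_nonempty by (auto simp: S_def)
  have F_eq: "F z u = (if u \<in> VMin then Min (f z ` S) else Max (f z ` S))" for z
    using assms by (simp add: F_op_def S_def f_def)
  show ?thesis
  proof (cases "u \<in> VMin")
    case True
    obtain e where "e \<in> S" "Min (f x ` S) = f x e" using obtains_MIN[OF S] .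
    moreover have "Min (f y ` S) \<le> f y e" using Min_le S \<open>e \<in> S\<close> by simp
    ultimately show ?thesis using True F_eq by (intro that[of e]) (auto simp: S_def f_def)
  next
    case False
    obtain e where "e \<in> S" "Max (f y ` S) = f y e" using obtains_MAX[OF S] .
    moreover have "f x e \<le> Max (f x ` S)" using Max_ge S \<open>e \<in> S\<close> by simp
    ultimately show ?thesis using False F_eq by (intro that[of e]) (auto simp: S_def f_def)
  qed
qed

definition strict_decrease :: "nat \<Rightarrow> 'v \<Rightarrow> bool" where
  "strict_decrease k u \<longleftrightarrow> F_iter (Suc k) u < F_iter k u"

lemma strict_decrease_nontarget: "strict_decrease k u \<Longrightarrow> u \<notin> VT"
  by (auto simp: strict_decrease_def F_iter_target)

lemma strict_decrease_propagates:
  assumes "strict_decrease (Suc k) u"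
  obtains e where "e \<in> E" "src e = u" "ereal (w e) + F_iter (Suc k) (tgt e) \<le> F_iter (Suc (Suc k)) u"
    "strict_decrease k (tgt e)"
proof -
  obtain e where e: "e \<in> E" "src e = u"
    and lower: "ereal (w e) + F_iter (Suc k) (tgt e) \<le> F_iter (Suc (Suc k)) u"
    and upper: "F_iter (Suc k) u \<le> ereal (w e) + F_iter k (tgt e)"
    using F_bracketing_edge[OF strict_decrease_nontarget[OF assms]]
    by (metis F_iter_Suc)
  have "ereal (w e) + F_iter (Suc k) (tgt e) < ereal (w e) + F_iter k (tgt e)"
    using lower assms upper unfolding strict_decrease_def by order
  then have "strict_decrease k (tgt e)"
    unfolding strict_decrease_def by (metis add_left_mono not_less)
  with e lower that show ?thesis by blast
qed

text \<open>Position \<open>l\<close> of the walk sits at level \<open>k - l\<close>.\<close>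

definition descent_walk :: "nat \<Rightarrow> (nat \<Rightarrow> 'v) \<Rightarrow> (nat \<Rightarrow> ('v, 'a) edge) \<Rightarrow> bool" where
  "descent_walk k y es \<longleftrightarrow>
     (\<forall>l<k. es l \<in> E \<and> src (es l) = y l \<and> tgt (es l) = y (Suc l)
        \<and> ereal (w (es l)) + F_iter (k - l) (y (Suc l)) \<le> F_iter (Suc (k - l)) (y l))
     \<and> (\<forall>l\<le>k. strict_decrease (k - l) (y l))"

lemma descent_walk_exists:
  "strict_decrease k v \<Longrightarrow> \<exists>y es. y 0 = v \<and> descent_walk k y es"
proof (induction k arbitrary: v)
  case 0
  then have "descent_walk 0 (\<lambda>_. v) es" for es by (simp add: descent_walk_def)
  then show ?case by (intro exI[of _ "\<lambda>_. v"]) simp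
next
  case (Suc k)
  obtain e where e: "e \<in> E" "src e = v"
    "ereal (w e) + F_iter (Suc k) (tgt e) \<le> F_iter (Suc (Suc k)) v" "strict_decrease k (tgt e)"
    using strict_decrease_propagates[OF Suc.prems] by blast
  obtain y es where "y 0 = tgt e" "descent_walk k y es"
    using Suc.IH[OF e(4)] by blast
  then have "descent_walk (Suc k) (case_nat v y) (case_nat e es)"
    using e Suc.prems
    by (auto simp: descent_walk_def All_less_Suc2 simp flip: less_Suc_eq_le split: nat.split)
  then show ?case by (intro exI[of _ "case_nat v y"] exI) simp
qed

lemma descent_walk_telescope:
  assumes "descent_walk k y es" and "i \<le> j" and "j \<le> k"
  shows "ereal (\<Sum>l\<in>{i..<j}. w (es l)) + F_iter (Suc (k - j)) (y j) \<le> F_iter (Suc (k - i)) (y i)"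
proof (rule ereal_telescope_le[OF _ \<open>i \<le> j\<close>, where g = "\<lambda>l. F_iter (Suc (k - l)) (y l)"])
  fix l assume "i \<le> l" "l < j"
  then have "Suc (k - Suc l) = k - l" using \<open>j \<le> k\<close> by simp
  then show "ereal (w (es l)) + F_iter (Suc (k - Suc l)) (y (Suc l)) \<le> F_iter (Suc (k - l)) (y l)"
    using assms(1) \<open>l < j\<close> \<open>j \<le> k\<close> by (simp add: descent_walk_def)
qed

theorem F_iter_stable_step:
  assumes finite_nontargets: "finite (- VT)" and "card (- VT) \<le> k"
    and positive_cycles: "\<And>es. is_cycle E es \<Longrightarrow> cycle_vertices es \<subseteq> - VT \<Longrightarrow> cycle_weight w es > 0"
  shows "F_iter (Suc k) = F_iter k"
proof (rule ccontr)
  assume "F_iter (Suc k) \<noteq> F_iter k"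
  then obtain v where "F_iter (Suc k) v \<noteq> F_iter k v" by (meson ext)
  moreover have "F_iter (Suc k) v \<le> F_iter k v"
    using decseq_SucD[OF decseq_F_iter] by (simp add: le_fun_def)
  ultimately have "strict_decrease k v" by (simp add: strict_decrease_def)
  then obtain y es where walk: "descent_walk k y es"
    using descent_walk_exists by blast
  have nontarget: "y l \<in> - VT" if "l \<le> k" for l
    using walk that strict_decrease_nontarget unfolding descent_walk_def by blast
  have "\<not> inj_on y {0..k}"
  proof
    assume "inj_on y {0..k}"
    then have "card {0..k} \<le> card (- VT)"
      using nontarget finite_nontargets by (intro card_inj_on_le) auto
    with \<open>card (- VT) \<le> k\<close> show False by simp
  qed
  then obtain i j where ij: "i < j" "j \<le> k" "y j = y i"
    unfolding inj_on_def by (metis atLeastAtMost_iff linorder_neqE_nat)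
  define C where "C = map es [i..<j]"
  have "is_cycle E C" and "cycle_vertices C \<subseteq> y ` {i..j}"
    using walk ij is_cycle_of_walk[of i j es E y] unfolding C_def descent_walk_def by auto
  then have positive: "cycle_weight w C > 0"
    using nontarget ij by (intro positive_cycles) auto
  have "cycle_weight w C = (\<Sum>l\<in>{i..<j}. w (es l))"
    by (simp add: C_def cycle_weight_def interv_sum_list_conv_sum_set_nat comp_def)
  then have around: "ereal (cycle_weight w C) + F_iter (Suc (k - j)) (y i) \<le> F_iter (Suc (k - i)) (y i)"
    using descent_walk_telescope[OF walk, of i j] ij by simp
  have antitone: "F_iter (Suc (k - i)) (y i) \<le> F_iter (Suc (k - j)) (y i)"
    using decseqD[OF decseq_F_iter, of "Suc (k - j)" "Suc (k - i)"] ij by (simp add: le_fun_def)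
  have "strict_decrease (k - i) (y i)"
    using walk ij by (simp add: descent_walk_def)
  then have "F_iter (Suc (k - i)) (y i) \<noteq> \<infinity>"
    by (auto simp: strict_decrease_def)
  with positive around antitone F_iter_not_MInfty[of "Suc (k - i)" "y i"] show False
    by (cases "F_iter (Suc (k - i)) (y i)"; cases "F_iter (Suc (k - j)) (y i)") auto
qed

end

theorem proposition2:
  fixes VMin VT :: "'v::finite set"
    and E :: "('v, 'a) edge set"
    and w :: "('v, 'a) edge \<Rightarrow> int"
    and c :: "'v \<Rightarrow> int"
  assumes game: "weighted_game VMin VT E"
    and sc: "strongly_connected_on E (- VT)"
    and poscyc: "\<And>es. is_cycle E es \<Longrightarrow> cycle_vertices es \<subseteq> - VT \<Longrightarrow> cycle_weight w es > 0"
    and finval: "\<And>v. game_value VMin VT E w c v \<noteq> \<infinity>"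
  shows "\<forall>k. (F_op VMin VT E w c ^^ (card (- VT) + k)) (x0_vec VT c)
            = (F_op VMin VT E w c ^^ card (- VT)) (x0_vec VT c)"
proof -
  interpret iterated_game VMin VT E w c
    using game by unfold_locales (auto simp: weighted_game_def)
  have "F_iter (card (- VT) + k) = F_iter (card (- VT))" for k
    by (induction k) (simp_all add: F_iter_stable_step poscyc)
  then show ?thesis by (simp add: F_iter_def)
qed

end
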